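(* For each fixed $t>0$ the function $x\mapsto h(x,t)$ is concave on $x>0$. Moreover $\mu/\rho-u_0+h(x,t)\le e^{\rho t}[x-u_0+\mu/\rho]$ for $x\ge u_0$, and $h(x,t)\le e^{\rho t}V_0(x)$ for $x\ge0$.
   Context: Fix $\mu,\sigma,\rho>0$. $A=\frac12\sigma^2\frac{d^2}{dx^2}+\mu\frac{d}{dx}$ is the generator of $X(t)=X(0)+\mu t+\sigma W(t)$, $W$ standard Brownian motion. Let $r_1=(-\mu+\sqrt{\mu^2+2\sigma^2\rho})/\sigma^2$, $r_2=(\mu+\sqrt{\mu^2+2\sigma^2\rho})/\sigma^2$, $u_0=\frac{1}{r_1+r_2}\ln\frac{\rho+\mu r_2}{\rho-\mu r_1}$, and $V_0:\mathbf{R}\to\mathbf{R}$ the solution of $(A-\rho)V_0=0$ with $V_0(u_0)=\mu/\rho$, $V_0'(u_0)=1$ (so $V_0(0)=0$). For $x>0$ let $\tau_x$ be the first hitting time of $0$ by $X$ started at $x$ and $p(x,t)=P(\tau_x<t)$. $h(x,t)$, $x>0,t>0$, is the solution of $\partial h/\partial t=Ah$ with $h(0,t)=0$, $h(x,0)=x$; equivalently $h(x,t)=x+\mu t-\mu\int_0^tp(x,s)ds$. *)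

theory Defs
  imports "HOL-Probability.Probability"
begin

definition Phi :: "real \<Rightarrow> real" where
  "Phi z = (LINT y:{..z}|lborel. std_normal_density y)"

text \<open>p(x,t) = P(tau_x < t): law of the first hitting time of 0 by
  X(t) = x + mu t + sg W(t) started at x > 0 (inverse Gaussian law).\<close>
definition hit_cdf :: "real \<Rightarrow> real \<Rightarrow> real \<Rightarrow> real \<Rightarrow> real" where
  "hit_cdf mu sg x t =
     Phi ((- x - mu * t) / (sg * sqrt t))
     + exp (- 2 * mu * x / sg\<^sup>2) * Phi ((- x + mu * t) / (sg * sqrt t))"

definition h :: "real \<Rightarrow> real \<Rightarrow> real \<Rightarrow> real \<Rightarrow> real" where
  "h mu sg x t = x + mu * t - mu * integral {0..t} (\<lambda>s. hit_cdf mu sg x s)"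

definition r1 :: "real \<Rightarrow> real \<Rightarrow> real \<Rightarrow> real" where
  "r1 mu sg rho = (- mu + sqrt (mu\<^sup>2 + 2 * sg\<^sup>2 * rho)) / sg\<^sup>2"

definition r2 :: "real \<Rightarrow> real \<Rightarrow> real \<Rightarrow> real" where
  "r2 mu sg rho = (mu + sqrt (mu\<^sup>2 + 2 * sg\<^sup>2 * rho)) / sg\<^sup>2"

definition u0 :: "real \<Rightarrow> real \<Rightarrow> real \<Rightarrow> real" where
  "u0 mu sg rho = 1 / (r1 mu sg rho + r2 mu sg rho) *
     ln ((rho + mu * r2 mu sg rho) / (rho - mu * r1 mu sg rho))"

definition V0 :: "real \<Rightarrow> real \<Rightarrow> real \<Rightarrow> real \<Rightarrow> real" where
  "V0 mu sg rho = (THE V. \<exists>V' V''.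
      (\<forall>x. (V has_real_derivative V' x) (at x)) \<and>
      (\<forall>x. (V' has_real_derivative V'' x) (at x)) \<and>
      (\<forall>x. sg\<^sup>2 / 2 * V'' x + mu * V' x - rho * V x = 0) \<and>
      V (u0 mu sg rho) = mu / rho \<and> V' (u0 mu sg rho) = 1)"

end

theory Submission
  imports Defs
begin

text \<open>
  The first-passage law gives h in closed form in terms of the normal distribution function,
  and this closed form solves \<open>\<partial>\<^sub>t h = A h\<close> with \<open>h(0,t) = 0\<close> and \<open>h(x,0+) = x\<close>.
  The map \<open>x \<mapsto> p(x,s)\<close> is convex (its second derivative is a sum of nonnegative terms),
  so \<open>h(x,t) = x + \<mu>t - \<mu> \<integral>\<^sub>0\<^sup>t p(x,s) ds\<close> is concave. Since \<open>p \<ge> 0\<close> we have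
  \<open>h(x,t) \<le> x + \<mu>t\<close>, and \<open>1 + \<rho>t \<le> exp(\<rho>t)\<close> turns this into the affine bound.
  The function \<open>V\<^sub>0\<close> is an explicit combination of \<open>exp(r\<^sub>1 x)\<close> and \<open>exp(-r\<^sub>2 x)\<close> with an
  inflection point at \<open>u\<^sub>0\<close>, where its slope is 1; hence \<open>V\<^sub>0' \<ge> 1\<close>, so \<open>V\<^sub>0(x) \<ge> x\<close> and
  \<open>V\<^sub>0(x) \<ge> \<mu>/\<rho> + x - u\<^sub>0\<close>, and for \<open>x \<ge> u\<^sub>0\<close> the last bound follows from the affine one.
  On \<open>[0, u\<^sub>0]\<close> the function \<open>exp(\<rho>t) V\<^sub>0(x) - h(x,t)\<close> solves the same parabolic equation,
  vanishes at \<open>x = 0\<close>, is nonnegative at \<open>x = u\<^sub>0\<close> and at least \<open>-\<mu>\<delta>\<close> at time \<open>\<delta>\<close>;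
  the minimum principle and \<open>\<delta> \<rightarrow> 0\<close> give the claim.
\<close>

lemma Phi_eq_cdf: "Phi = cdf std_normal_distribution"
proof
  fix z
  have "cdf std_normal_distribution z
      = enn2real (\<integral>\<^sup>+x. ennreal (std_normal_density x) * indicator {..z} x \<partial>lborel)"
    unfolding cdf_def measure_def by (subst emeasure_density) auto
  also have "\<dots> = Phi z"
    unfolding Phi_def set_lebesgue_integral_def
    by (subst integral_eq_nn_integral)
       (auto intro!: integrable_mult_indicator arg_cong[where f=enn2real] nn_integral_cong
             simp: integrable_std_normal_moment[of 0, simplified] split: split_indicator)
  finally show "Phi z = cdf std_normal_distribution z" by simp
qed

lemma Phi_nonneg: "0 \<le> Phi z"
  unfolding Phi_eq_cdf
  by (rule finite_borel_measure.cdf_nonneg[OF real_distribution.finite_borel_measure_M[OF real_dist_normal_dist]])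

lemma Phi_tendsto_at_bot: "(Phi \<longlongrightarrow> 0) at_bot"
  unfolding Phi_eq_cdf
  by (rule finite_borel_measure.cdf_lim_at_bot[OF real_distribution.finite_borel_measure_M[OF real_dist_normal_dist]])

lemma Phi_tendsto_at_top: "(Phi \<longlongrightarrow> 1) at_top"
  unfolding Phi_eq_cdf by (rule real_distribution.cdf_lim_at_top_prob[OF real_dist_normal_dist])

lemma Phi_eq_add_integral:
  assumes "a \<le> z"
  shows "Phi z = Phi a + integral {a..z} std_normal_density"
proof -
  have integrable: "set_integrable lborel A std_normal_density" if "A \<in> sets borel" for A
    using that integrable_std_normal_moment[of 0] unfolding set_integrable_def
    by (intro integrable_mult_indicator) auto
  have split: "{..z} = {..a} \<union> {a<..z}" using assms by auto
  have "Phi z = Phi a + (LINT y:{a<..z}|lborel. std_normal_density y)"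
    unfolding Phi_def split by (rule set_integral_Un) (auto simp: integrable)
  also have "(LINT y:{a<..z}|lborel. std_normal_density y) = integral {a<..z} std_normal_density"
    by (rule set_borel_integral_eq_integral(2)) (simp add: integrable)
  also have "\<dots> = integral {a..z} std_normal_density"
    by (rule integral_spike_set) (auto intro: negligible_subset[of "{a}"])
  finally show ?thesis .
qed

lemma has_real_derivative_Phi: "(Phi has_real_derivative std_normal_density z) (at z)"
proof -
  have continuous: "continuous_on S std_normal_density" for S
    unfolding normal_density_def by (intro continuous_intros) auto
  have "((\<lambda>u. Phi (z - 1) + integral {z - 1..u} std_normal_density)
      has_real_derivative std_normal_density z) (at z within {z - 1..z + 1})"
    using integral_has_real_derivative[OF continuous, of z "z - 1" "z + 1"]
    by (auto intro!: derivative_eq_intros)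
  then have "((\<lambda>u. Phi (z - 1) + integral {z - 1..u} std_normal_density)
      has_real_derivative std_normal_density z) (at z)"
    by (subst (asm) at_within_interior[of z]) auto
  then show ?thesis
    by (rule has_field_derivative_transform_within_open[where S="{z - 1<..}"])
       (auto simp: Phi_eq_add_integral[symmetric])
qed

lemma Phi_has_real_derivative [derivative_intros]:
  "(f has_real_derivative f') (at x within S) \<Longrightarrow>
    ((\<lambda>x. Phi (f x)) has_real_derivative std_normal_density (f x) * f') (at x within S)"
  using DERIV_chain2[OF has_real_derivative_Phi] by blast

lemma continuous_on_Phi [continuous_intros]:
  "continuous_on S f \<Longrightarrow> continuous_on S (\<lambda>x. Phi (f x))"
  using continuous_on_compose2[of UNIV Phi S f] DERIV_isCont[OF has_real_derivative_Phi]
  by (auto intro: continuous_at_imp_continuous_on)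

lemma std_normal_density_has_real_derivative [derivative_intros]:
  "(f has_real_derivative f') (at x within S) \<Longrightarrow>
    ((\<lambda>x. std_normal_density (f x)) has_real_derivative - f x * std_normal_density (f x) * f')
      (at x within S)"
  unfolding normal_density_def
  by (auto intro!: derivative_eq_intros simp: field_simps power2_eq_square)

lemma Phi_minus: "Phi (- z) = 1 - Phi z"
proof -
  have "((\<lambda>z. Phi (- z) + Phi z) has_real_derivative 0) (at y)" for y
    by (auto intro!: derivative_eq_intros simp: normal_density_def)
  then have const: "(\<lambda>y. Phi (- y) + Phi y) = (\<lambda>y. Phi (- z) + Phi z)"
    using DERIV_isconst_all by fastforce
  have "((\<lambda>y. Phi (- y) + Phi y) \<longlongrightarrow> 0 + 1) at_top"
    by (intro tendsto_add filterlim_compose[OF Phi_tendsto_at_bot filterlim_uminus_at_bot_at_top]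
        Phi_tendsto_at_top)
  then have "((\<lambda>y::real. Phi (- z) + Phi z) \<longlongrightarrow> 0 + 1) at_top"
    by (simp only: const)
  then show ?thesis by (simp add: tendsto_const_iff eq_diff_eq)
qed

section \<open>A closed form for h\<close>

text \<open>The time integral of the first-passage law, see \<open>has_integral_hit_cdf\<close>.\<close>

definition h_closed :: "real \<Rightarrow> real \<Rightarrow> real \<Rightarrow> real \<Rightarrow> real" where
  "h_closed mu sg x t = x + mu * t - (x + mu * t) * Phi ((- x - mu * t) / (sg * sqrt t))
     - exp (- 2 * mu * x / sg\<^sup>2) * (mu * t - x) * Phi ((- x + mu * t) / (sg * sqrt t))"

definition h_closed_x :: "real \<Rightarrow> real \<Rightarrow> real \<Rightarrow> real \<Rightarrow> real" where
  "h_closed_x mu sg x t = 1 - Phi ((- x - mu * t) / (sg * sqrt t))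
     + exp (- 2 * mu * x / sg\<^sup>2) * Phi ((- x + mu * t) / (sg * sqrt t)) * (1 + 2 * mu / sg\<^sup>2 * (mu * t - x))
     + 2 * mu * t * std_normal_density ((- x - mu * t) / (sg * sqrt t)) / (sg * sqrt t)"

definition h_closed_xx :: "real \<Rightarrow> real \<Rightarrow> real \<Rightarrow> real \<Rightarrow> real" where
  "h_closed_xx mu sg x t =
     - (2 * mu / sg\<^sup>2) * exp (- 2 * mu * x / sg\<^sup>2) * Phi ((- x + mu * t) / (sg * sqrt t))
        * (2 + 2 * mu / sg\<^sup>2 * (mu * t - x))
     - 2 * (2 * mu / sg\<^sup>2) * mu * t * std_normal_density ((- x - mu * t) / (sg * sqrt t)) / (sg * sqrt t)"

lemma exp_mult_std_normal_density:
  assumes "t > 0" "sg > 0"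
  shows "exp (- 2 * mu * x / sg\<^sup>2) * std_normal_density ((- x + mu * t) / (sg * sqrt t))
       = std_normal_density ((- x - mu * t) / (sg * sqrt t))"
proof -
  have "- 2 * mu * x / sg\<^sup>2 + - ((- x + mu * t) / (sg * sqrt t))\<^sup>2 / 2
      = - ((- x - mu * t) / (sg * sqrt t))\<^sup>2 / 2"
    using assms by (simp add: field_simps power2_eq_square)
  then show ?thesis
    unfolding std_normal_density_def by (metis mult.left_commute mult_exp_exp)
qed

lemma has_real_derivative_h_closed_t:
  assumes "t > 0" "sg > 0"
  shows "((\<lambda>s. h_closed mu sg x s) has_real_derivative mu - mu * hit_cdf mu sg x t) (at t)"
proof -
  define c where "c = sg * sqrt t"
  define c' where "c' = sg / (2 * sqrt t)"
  define z where "z s = (- x - mu * s) / (sg * sqrt s)" for s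
  define w where "w s = (- x + mu * s) / (sg * sqrt s)" for s
  define z' where "z' = (- mu * c - (- x - mu * t) * c') / c\<^sup>2"
  define w' where "w' = (mu * c - (- x + mu * t) * c') / c\<^sup>2"
  define E where "E = exp (- 2 * mu * x / sg\<^sup>2)"
  have c: "c > 0" "sqrt t * sqrt t = t" using assms by (auto simp: c_def)
  have dz: "(z has_real_derivative z') (at t)"
    using assms c unfolding z_def z'_def
    by (auto intro!: derivative_eq_intros simp: c_def c'_def field_simps power2_eq_square)
  have dw: "(w has_real_derivative w') (at t)"
    using assms c unfolding w_def w'_def
    by (auto intro!: derivative_eq_intros simp: c_def c'_def field_simps power2_eq_square)
  have "(\<lambda>s. h_closed mu sg x s)
      = (\<lambda>s. x + mu * s - (x + mu * s) * Phi (z s) - E * (mu * s - x) * Phi (w s))"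
    unfolding h_closed_def z_def w_def E_def by (simp add: mult.assoc)
  then have "((\<lambda>s. h_closed mu sg x s) has_real_derivative
      mu - (mu * Phi (z t) + (x + mu * t) * (std_normal_density (z t) * z'))
      - E * (mu * Phi (w t) + (mu * t - x) * (std_normal_density (w t) * w'))) (at t)"
    by (auto intro!: derivative_eq_intros dz dw simp: algebra_simps)
  moreover have "mu - (mu * Phi (z t) + (x + mu * t) * (std_normal_density (z t) * z'))
      - E * (mu * Phi (w t) + (mu * t - x) * (std_normal_density (w t) * w'))
      = mu - mu * hit_cdf mu sg x t"
  proof -
    have Ew: "E * std_normal_density (w t) = std_normal_density (z t)"
      unfolding E_def w_def z_def by (rule exp_mult_std_normal_density[OF assms])
    have cancel: "(x + mu * t) * z' + (mu * t - x) * w' = 0"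
      using c assms unfolding z'_def w'_def c_def c'_def by (simp add: field_simps)
    have "mu - (mu * Phi (z t) + (x + mu * t) * (std_normal_density (z t) * z'))
        - E * (mu * Phi (w t) + (mu * t - x) * (std_normal_density (w t) * w'))
        = mu - mu * (Phi (z t) + E * Phi (w t))
          - std_normal_density (z t) * ((x + mu * t) * z' + (mu * t - x) * w')"
      unfolding Ew[symmetric] by (simp add: algebra_simps)
    then show ?thesis
      unfolding cancel hit_cdf_def z_def w_def E_def by simp
  qed
  ultimately show ?thesis by simp
qed

lemma has_real_derivative_h_closed_x:
  assumes "t > 0" "sg > 0"
  shows "((\<lambda>y. h_closed mu sg y t) has_real_derivative h_closed_x mu sg x t) (at x)"
proof -
  define c where "c = sg * sqrt t"
  define k where "k = 2 * mu / sg\<^sup>2"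
  define z where "z y = (- y - mu * t) / c" for y
  define w where "w y = (- y + mu * t) / c" for y
  define E where "E y = exp (- k * y)" for y
  have c: "c > 0" using assms by (simp add: c_def)
  have E_eq: "exp (- 2 * mu * y / sg\<^sup>2) = E y" for y
    unfolding E_def k_def by (simp add: field_simps)
  have Ew: "E x * std_normal_density (w x) = std_normal_density (z x)"
    using exp_mult_std_normal_density[OF assms, of mu x] unfolding E_eq z_def w_def c_def .
  have dz: "(z has_real_derivative - 1 / c) (at x)" and dw: "(w has_real_derivative - 1 / c) (at x)"
    unfolding z_def w_def using c by (auto intro!: derivative_eq_intros simp: field_simps)
  have dE: "(E has_real_derivative - k * E x) (at x)"
    unfolding E_def by (auto intro!: derivative_eq_intros)
  have "(\<lambda>y. h_closed mu sg y t)
      = (\<lambda>y. y + mu * t - (y + mu * t) * Phi (z y) - E y * (mu * t - y) * Phi (w y))"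
    unfolding h_closed_def z_def w_def E_eq c_def by (simp add: mult.assoc)
  moreover have "((\<lambda>y. y + mu * t - (y + mu * t) * Phi (z y) - E y * (mu * t - y) * Phi (w y))
      has_real_derivative 1 - Phi (z x) + (x + mu * t) * std_normal_density (z x) / c
        + E x * Phi (w x) * (1 + k * (mu * t - x))
        + E x * std_normal_density (w x) * (mu * t - x) / c) (at x)"
    by (rule derivative_eq_intros dz dw dE refl)+ (use c in \<open>simp add: field_simps\<close>)
  moreover have "1 - Phi (z x) + (x + mu * t) * std_normal_density (z x) / c
        + E x * Phi (w x) * (1 + k * (mu * t - x))
        + E x * std_normal_density (w x) * (mu * t - x) / c = h_closed_x mu sg x t"
  proof -
    have x: "h_closed_x mu sg x t = 1 - Phi (z x) + E x * Phi (w x) * (1 + k * (mu * t - x))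
        + 2 * mu * t * std_normal_density (z x) / c"
      unfolding h_closed_x_def E_eq z_def w_def c_def k_def by simp
    show ?thesis
      unfolding x Ew using c by (simp add: field_simps)
  qed
  ultimately show ?thesis by simp
qed

lemma has_real_derivative_h_closed_x_x:
  assumes "t > 0" "sg > 0"
  shows "((\<lambda>y. h_closed_x mu sg y t) has_real_derivative h_closed_xx mu sg x t) (at x)"
proof -
  define c where "c = sg * sqrt t"
  define k where "k = 2 * mu / sg\<^sup>2"
  define z where "z y = (- y - mu * t) / c" for y
  define w where "w y = (- y + mu * t) / c" for y
  define E where "E y = exp (- k * y)" for y
  have c: "c > 0" using assms by (simp add: c_def)
  have k: "k = 2 * mu * t / c\<^sup>2"
    using assms unfolding k_def c_def by (simp add: field_simps power2_eq_square)
  have E_eq: "exp (- 2 * mu * y / sg\<^sup>2) = E y" for y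
    unfolding E_def k_def by (simp add: field_simps)
  have Ew: "E x * std_normal_density (w x) = std_normal_density (z x)"
    using exp_mult_std_normal_density[OF assms, of mu x] unfolding E_eq z_def w_def c_def .
  have dz: "(z has_real_derivative - 1 / c) (at x)" and dw: "(w has_real_derivative - 1 / c) (at x)"
    unfolding z_def w_def using c by (auto intro!: derivative_eq_intros simp: field_simps)
  have dE: "(E has_real_derivative - k * E x) (at x)"
    unfolding E_def by (auto intro!: derivative_eq_intros)
  have "(\<lambda>y. h_closed_x mu sg y t) = (\<lambda>y. 1 - Phi (z y) + E y * Phi (w y) * (1 + k * (mu * t - y))
      + 2 * mu * t / c * std_normal_density (z y))"
    unfolding h_closed_x_def E_eq z_def w_def c_def k_def by simp
  moreover have "((\<lambda>y. 1 - Phi (z y) + E y * Phi (w y) * (1 + k * (mu * t - y))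
      + 2 * mu * t / c * std_normal_density (z y)) has_real_derivative
      std_normal_density (z x) / c - k * E x * Phi (w x) * (2 + k * (mu * t - x))
      - E x * std_normal_density (w x) * (1 + k * (mu * t - x)) / c
      + 2 * mu * t * z x * std_normal_density (z x) / c\<^sup>2) (at x)"
    by (rule derivative_eq_intros dz dw dE refl)+ (use c in \<open>simp add: field_simps power2_eq_square\<close>)
  moreover have "std_normal_density (z x) / c - k * E x * Phi (w x) * (2 + k * (mu * t - x))
      - E x * std_normal_density (w x) * (1 + k * (mu * t - x)) / c
      + 2 * mu * t * z x * std_normal_density (z x) / c\<^sup>2 = h_closed_xx mu sg x t"
  proof -
    have "2 * mu * t * z x / c\<^sup>2 = k * (- x - mu * t) / c"
      using c unfolding k z_def by (simp add: field_simps power2_eq_square)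
    then have last: "2 * mu * t * z x * std_normal_density (z x) / c\<^sup>2
        = k * (- x - mu * t) * std_normal_density (z x) / c"
      by (metis times_divide_eq_left mult.commute mult.left_commute)
    have xx: "h_closed_xx mu sg x t = - k * E x * Phi (w x) * (2 + k * (mu * t - x))
        - 2 * k * mu * t * std_normal_density (z x) / c"
      unfolding h_closed_xx_def E_eq z_def w_def c_def k_def by simp
    show ?thesis
      unfolding xx Ew last using c by (simp add: field_simps)
  qed
  ultimately show ?thesis by simp
qed

lemma h_closed_heat_equation:
  assumes "t > 0" "sg > 0"
  shows "mu - mu * hit_cdf mu sg x t = sg\<^sup>2 / 2 * h_closed_xx mu sg x t + mu * h_closed_x mu sg x t"
  unfolding hit_cdf_def h_closed_xx_def h_closed_x_def using assms
  by (simp add: field_simps power2_eq_square)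

lemma h_closed_0: "h_closed mu sg 0 t = 0"
  unfolding h_closed_def by (simp add: Phi_minus[of "mu * t / (sg * sqrt t)", simplified] algebra_simps)

lemma filterlim_affine_div_sqrt_at_bot:
  assumes "x > 0" "c > 0"
  shows "filterlim (\<lambda>s. (- x + a * s) / (c * sqrt s)) at_bot (at_right 0)"
proof -
  have inverse: "filterlim (\<lambda>s. inverse (c * sqrt s)) at_top (at_right 0)"
  proof (rule filterlim_inverse_at_top)
    show "((\<lambda>s. c * sqrt s) \<longlongrightarrow> 0) (at_right 0)"
      by (auto intro!: tendsto_eq_intros)
    show "\<forall>\<^sub>F s in at_right 0. 0 < c * sqrt s"
      using eventually_at_right_less[of "0::real"] by eventually_elim (use assms in auto)
  qed
  have "((\<lambda>s. - x + a * s) \<longlongrightarrow> - x) (at_right 0)"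
    by (auto intro!: tendsto_eq_intros)
  then have "filterlim (\<lambda>s. (- x + a * s) * inverse (c * sqrt s)) at_bot (at_right 0)"
    by (rule filterlim_tendsto_neg_mult_at_bot) (use assms inverse in auto)
  then show ?thesis by (simp add: divide_inverse)
qed

lemma tendsto_h_closed_at_right_0:
  assumes "x \<ge> 0" "sg > 0"
  shows "((\<lambda>s. h_closed mu sg x s) \<longlongrightarrow> x) (at_right 0)"
proof (cases "x = 0")
  case True
  then show ?thesis by (simp add: h_closed_0)
next
  case False
  then have "x > 0" using assms by simp
  then have "((\<lambda>s. Phi ((- x + a * s) / (sg * sqrt s))) \<longlongrightarrow> 0) (at_right 0)" for a
    using filterlim_compose[OF Phi_tendsto_at_bot filterlim_affine_div_sqrt_at_bot] assms by blast
  from this[of "- mu"] this[of mu]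
  have "((\<lambda>s. x + mu * s - (x + mu * s) * Phi ((- x - mu * s) / (sg * sqrt s))
     - exp (- 2 * mu * x / sg\<^sup>2) * (mu * s - x) * Phi ((- x + mu * s) / (sg * sqrt s)))
     \<longlongrightarrow> x + mu * 0 - (x + mu * 0) * 0 - exp (- 2 * mu * x / sg\<^sup>2) * (mu * 0 - x) * 0) (at_right 0)"
    by (intro tendsto_intros) simp_all
  then show ?thesis unfolding h_closed_def by simp
qed

lemma hit_cdf_nonneg: "0 \<le> hit_cdf mu sg x t"
  unfolding hit_cdf_def by (intro add_nonneg_nonneg mult_nonneg_nonneg Phi_nonneg) auto

lemma has_integral_hit_cdf:
  assumes "x \<ge> 0" "t > 0" "sg > 0" "mu > 0"
  shows "((\<lambda>s. hit_cdf mu sg x s) has_integral (x + mu * t - h_closed mu sg x t) / mu) {0..t}"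
proof -
  define G where "G s = (if s = 0 then x else h_closed mu sg x s)" for s
  have G_deriv: "(G has_real_derivative mu - mu * hit_cdf mu sg x s) (at s)" if "s > 0" for s
    by (rule has_field_derivative_transform_within_open[where S="{0<..}",
          OF has_real_derivative_h_closed_t[OF that assms(3)]])
       (use that in \<open>auto simp: G_def\<close>)
  have "continuous (at s within {0..t}) G" if "s \<in> {0..t}" for s
  proof (cases "s = 0")
    case True
    have "\<forall>\<^sub>F s in at_right 0. h_closed mu sg x s = G s"
      using eventually_at_right_less[of "0::real"] by eventually_elim (auto simp: G_def)
    then have "(G \<longlongrightarrow> G 0) (at_right 0)"
      using tendsto_cong tendsto_h_closed_at_right_0[OF assms(1,3)] by (fastforce simp: G_def)
    then show ?thesis
      using True assms(2) by (simp add: continuous_within at_within_Icc_at_right)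
  next
    case False
    then show ?thesis
      using that G_deriv[of s] DERIV_isCont continuous_at_imp_continuous_at_within by fastforce
  qed
  then have "((\<lambda>s. mu - mu * hit_cdf mu sg x s) has_integral (G t - G 0)) {0..t}"
    using assms(2) G_deriv
    by (intro fundamental_theorem_of_calculus_interior)
       (auto simp: continuous_on_eq_continuous_within has_real_derivative_iff_has_vector_derivative[symmetric])
  from has_integral_diff[OF has_integral_const_real[of mu 0 t] this]
  have "((\<lambda>s. mu * hit_cdf mu sg x s) has_integral mu * t - (h_closed mu sg x t - x)) {0..t}"
    using assms(2) by (simp add: G_def mult.commute)
  from has_integral_cmul[OF this, of "1 / mu"]
  have "((\<lambda>s. hit_cdf mu sg x s) has_integral (mu * t - (h_closed mu sg x t - x)) / mu) {0..t}"
    using assms(4) by simp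
  moreover have "mu * t - (h_closed mu sg x t - x) = x + mu * t - h_closed mu sg x t"
    by simp
  ultimately show ?thesis by simp
qed

lemma h_eq_h_closed:
  assumes "x \<ge> 0" "t > 0" "sg > 0" "mu > 0"
  shows "h mu sg x t = h_closed mu sg x t"
  using integral_unique[OF has_integral_hit_cdf[OF assms]] assms(4) unfolding h_def by simp

lemma convex_on_integral:
  fixes f :: "'a::real_vector \<Rightarrow> 'b::euclidean_space \<Rightarrow> real"
  assumes "convex C"
    and convex: "\<And>s. s \<in> S \<Longrightarrow> convex_on C (\<lambda>x. f x s)"
    and integrable: "\<And>x. x \<in> C \<Longrightarrow> f x integrable_on S"
  shows "convex_on C (\<lambda>x. integral S (f x))"
  unfolding convex_on_def
proof (intro conjI ballI allI impI)
  fix x y and u v :: real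
  assume xy: "x \<in> C" "y \<in> C" and uv: "0 \<le> u" "0 \<le> v" "u + v = 1"
  then have "u *\<^sub>R x + v *\<^sub>R y \<in> C"
    using \<open>convex C\<close> by (simp add: convexD)
  then have "integral S (f (u *\<^sub>R x + v *\<^sub>R y)) \<le> integral S (\<lambda>s. u * f x s + v * f y s)"
    using xy uv convex by (intro integral_le integrable integrable_add integrable_on_mult_right)
      (auto simp: convex_on_def)
  also have "\<dots> = u * integral S (f x) + v * integral S (f y)"
    using xy by (simp add: integral_add integrable integrable_on_mult_right)
  finally show "integral S (f (u *\<^sub>R x + v *\<^sub>R y)) \<le> u * integral S (f x) + v * integral S (f y)" .
qed (rule assms(1))

lemma convex_on_hit_cdf:
  assumes "mu > 0" "sg > 0" "s \<ge> 0"
  shows "convex_on {0<..} (\<lambda>x. hit_cdf mu sg x s)"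
proof -
  define ci where "ci = 1 / (sg * sqrt s)"
  define k where "k = 2 * mu / sg\<^sup>2"
  define a where "a y = (- y - mu * s) * ci" for y
  define b where "b y = (- y + mu * s) * ci" for y
  define E where "E y = exp (- k * y)" for y
  define f' where "f' y = - ci * std_normal_density (a y) - k * E y * Phi (b y)
      - ci * E y * std_normal_density (b y)" for y
  define f'' where "f'' y = - a y * ci\<^sup>2 * std_normal_density (a y) + k\<^sup>2 * E y * Phi (b y)
      + ci * E y * std_normal_density (b y) * (2 * k - b y * ci)" for y
  have ci: "ci \<ge> 0" using assms by (simp add: ci_def)
  have "exp (- 2 * mu * y / sg\<^sup>2) = E y" for y
    unfolding E_def k_def by (simp add: field_simps)
  then have "(\<lambda>x. hit_cdf mu sg x s) = (\<lambda>y. Phi (a y) + E y * Phi (b y))"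
    unfolding hit_cdf_def a_def b_def ci_def by (simp add: divide_inverse)
  moreover have "((\<lambda>y. Phi (a y) + E y * Phi (b y)) has_real_derivative f' y) (at y)" for y
    unfolding a_def b_def E_def f'_def
    by (rule derivative_eq_intros refl)+ (simp add: algebra_simps)
  moreover have "(f' has_real_derivative f'' y) (at y)" for y
    unfolding f'_def[abs_def] f''_def a_def b_def E_def
    by (rule derivative_eq_intros refl)+ (simp add: algebra_simps power2_eq_square)
  moreover have "f'' y \<ge> 0" if "y > 0" for y
  proof -
    have "0 \<le> mu * s" using assms by simp
    then have "- a y \<ge> 0"
      using that ci unfolding a_def by (simp add: mult_nonpos_nonneg)
    then have first: "- a y * ci\<^sup>2 * std_normal_density (a y) \<ge> 0"
      by (intro mult_nonneg_nonneg) auto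
    have second: "k\<^sup>2 * E y * Phi (b y) \<ge> 0"
      by (simp add: E_def Phi_nonneg)
    have "b y * ci \<le> 2 * k"
    proof (cases "s = 0")
      case False
      have "b y * ci \<le> mu * s * ci\<^sup>2"
        using that ci unfolding b_def by (simp add: power2_eq_square algebra_simps mult_right_mono)
      also have "\<dots> = mu / sg\<^sup>2"
        using False assms unfolding ci_def by (simp add: power2_eq_square field_simps)
      also have "\<dots> \<le> 2 * k"
        using assms unfolding k_def by (simp add: field_simps)
      finally show ?thesis .
    qed (use assms in \<open>simp add: b_def ci_def k_def\<close>)
    then have third: "ci * E y * std_normal_density (b y) * (2 * k - b y * ci) \<ge> 0"
      using ci by (simp add: E_def)
    show ?thesis
      unfolding f''_def using first second third by linarith
  qed
  ultimately show ?thesis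
    by (intro f''_ge0_imp_convex[OF convex_real_interval(3)[of 0]]) auto
qed

lemma concave_on_h:
  assumes "mu > 0" "sg > 0" "t > 0"
  shows "concave_on {0<..} (\<lambda>x. h mu sg x t)"
proof -
  have "convex_on {0<..} (\<lambda>x. integral {0..t} (\<lambda>s. hit_cdf mu sg x s))"
    using assms
    by (intro convex_on_integral convex_on_hit_cdf has_integral_integrable[OF has_integral_hit_cdf]) auto
  then have "concave_on {0<..} (\<lambda>x. x + mu * t - mu * integral {0..t} (\<lambda>s. hit_cdf mu sg x s))"
    using assms(1)
    by (intro concave_on_diff concave_on_add convex_on_cmul) (auto simp: concave_on_ident concave_on_const)
  then show ?thesis unfolding h_def .
qed

lemma h_le_add_drift:
  assumes "x \<ge> 0" "t > 0" "sg > 0" "mu > 0"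
  shows "h mu sg x t \<le> x + mu * t"
proof -
  have "0 \<le> integral {0..t} (\<lambda>s. hit_cdf mu sg x s)"
    using has_integral_hit_cdf[OF assms] by (intro integral_nonneg hit_cdf_nonneg) auto
  then show ?thesis unfolding h_def using assms(4) by simp
qed

lemma h_le_exp_affine:
  assumes "mu > 0" "sg > 0" "rho > 0" "t > 0" "0 \<le> x" "u \<le> x"
  shows "mu / rho - u + h mu sg x t \<le> exp (rho * t) * (x - u + mu / rho)"
proof -
  define L where "L = x - u + mu / rho"
  have L: "mu / rho \<le> L" "0 \<le> L"
    using assms by (auto simp: L_def)
  have "mu / rho - u + h mu sg x t \<le> L + rho * t * (mu / rho)"
    using h_le_add_drift[OF assms(5,4,2,1)] assms(3) by (simp add: L_def mult.commute)
  also have "\<dots> \<le> (1 + rho * t) * L"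
    using mult_left_mono[OF L(1), of "rho * t"] assms(3,4) by (simp add: algebra_simps)
  also have "\<dots> \<le> exp (rho * t) * L"
    using L(2) exp_ge_add_one_self by (rule mult_right_mono[rotated])
  finally show ?thesis by (simp add: L_def)
qed

section \<open>Uniqueness for linear second order equations\<close>

lemma eq_0_of_abs_deriv_le:
  fixes E E' :: "real \<Rightarrow> real"
  assumes deriv: "\<And>x. (E has_real_derivative E' x) (at x)"
    and nonneg: "\<And>x. 0 \<le> E x" and bound: "\<And>x. \<bar>E' x\<bar> \<le> C * E x" and "E u = 0"
  shows "E y = 0"
proof (cases "u \<le> y")
  case True
  have "E y * exp (- C * y) \<le> E u * exp (- C * u)"
  proof (rule DERIV_nonpos_imp_nonincreasing[OF True])
    fix x
    have "((\<lambda>x. E x * exp (- C * x)) has_real_derivative (E' x - C * E x) * exp (- C * x)) (at x)"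
      by (auto intro!: derivative_eq_intros deriv simp: algebra_simps)
    moreover have "(E' x - C * E x) * exp (- C * x) \<le> 0"
      using bound[of x] by (intro mult_nonpos_nonneg) auto
    ultimately show "\<exists>l. ((\<lambda>x. E x * exp (- C * x)) has_real_derivative l) (at x) \<and> l \<le> 0"
      by blast
  qed
  then show ?thesis
    using \<open>E u = 0\<close> nonneg[of y] by (simp add: mult_le_0_iff)
next
  case False
  have "E y * exp (C * y) \<le> E u * exp (C * u)"
  proof (rule DERIV_nonneg_imp_nondecreasing[of y u])
    show "y \<le> u" using False by simp
    fix x
    have "((\<lambda>x. E x * exp (C * x)) has_real_derivative (E' x + C * E x) * exp (C * x)) (at x)"
      by (auto intro!: derivative_eq_intros deriv simp: algebra_simps)
    moreover have "(E' x + C * E x) * exp (C * x) \<ge> 0"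
      using bound[of x] by (intro mult_nonneg_nonneg) auto
    ultimately show "\<exists>l. ((\<lambda>x. E x * exp (C * x)) has_real_derivative l) (at x) \<and> l \<ge> 0"
      by blast
  qed
  then show ?thesis
    using \<open>E u = 0\<close> nonneg[of y] by (simp add: mult_le_0_iff)
qed

lemma linear_ode2_eq_0:
  fixes D D' D'' :: "real \<Rightarrow> real"
  assumes D: "\<And>x. (D has_real_derivative D' x) (at x)"
    and D': "\<And>x. (D' has_real_derivative D'' x) (at x)"
    and ode: "\<And>x. D'' x = p * D x + q * D' x"
    and "D u = 0" "D' u = 0"
  shows "D y = 0"
proof -
  define E where "E x = (D x)\<^sup>2 + (D' x)\<^sup>2" for x
  define E' where "E' x = 2 * D x * D' x + 2 * D' x * D'' x" for x
  have bound: "\<bar>E' x\<bar> \<le> (1 + \<bar>p\<bar> + 2 * \<bar>q\<bar>) * E x" for x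
  proof -
    have "E' x = (1 + p) * (2 * (D x * D' x)) + 2 * q * (D' x)\<^sup>2"
      unfolding E'_def ode by (simp add: algebra_simps power2_eq_square)
    also have "\<bar>\<dots>\<bar> \<le> \<bar>1 + p\<bar> * (2 * \<bar>D x * D' x\<bar>) + 2 * \<bar>q\<bar> * (D' x)\<^sup>2"
      by (rule order.trans[OF abs_triangle_ineq]) (simp add: abs_mult)
    also have "\<dots> \<le> (1 + \<bar>p\<bar>) * (2 * \<bar>D x * D' x\<bar>) + 2 * \<bar>q\<bar> * (D' x)\<^sup>2"
      using abs_triangle_ineq[of 1 p] by (intro add_mono mult_right_mono) auto
    also have "\<dots> \<le> (1 + \<bar>p\<bar>) * E x + 2 * \<bar>q\<bar> * E x"
      using sum_squares_bound[of "\<bar>D x\<bar>" "\<bar>D' x\<bar>"]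
      by (intro add_mono mult_left_mono) (auto simp: E_def abs_mult power2_eq_square)
    finally show ?thesis by (simp add: algebra_simps)
  qed
  have deriv: "(E has_real_derivative E' x) (at x)" for x
    unfolding E_def E'_def by (auto intro!: derivative_eq_intros D D' simp: algebra_simps)
  have "E y = 0"
    by (rule eq_0_of_abs_deriv_le[OF deriv _ bound, of u]) (use assms in \<open>auto simp: E_def\<close>)
  then show ?thesis by (simp add: E_def add_nonneg_eq_0_iff)
qed

section \<open>A minimum principle for the heat equation with drift\<close>

lemma deriv2_nonneg_at_right_local_min:
  fixes f f' :: "real \<Rightarrow> real"
  assumes "0 < d"
    and f: "\<And>y. y \<in> {x..x + d} \<Longrightarrow> (f has_real_derivative f' y) (at y)"
    and f': "(f' has_real_derivative f'') (at x)" and "f' x = 0"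
    and min: "\<And>y. y \<in> {x..x + d} \<Longrightarrow> f x \<le> f y"
  shows "0 \<le> f''"
proof (rule ccontr)
  assume "\<not> 0 \<le> f''"
  then obtain e where "0 < e" and decreasing: "\<And>h. 0 < h \<Longrightarrow> h < e \<Longrightarrow> f' (x + h) < f' x"
    using DERIV_neg_dec_right[OF f'] by force
  define h where "h = min d e / 2"
  have h: "0 < h" "h < e" "h \<le> d"
    using \<open>0 < d\<close> \<open>0 < e\<close> by (auto simp: h_def)
  obtain z where z: "x < z" "z < x + h" "f (x + h) - f x = h * f' z"
    using MVT2[of x "x + h" f f'] h f by force
  have "f' z < 0"
    using decreasing[of "z - x"] z h \<open>f' x = 0\<close> by simp
  then have "f (x + h) < f x"
    using mult_pos_neg[OF h(1)] z(3) by fastforce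
  with min[of "x + h"] h show False by simp
qed

lemma deriv_nonpos_at_right_min:
  fixes g :: "real \<Rightarrow> real"
  assumes "(g has_real_derivative l) (at t)" "s < t" and min: "\<And>r. r \<in> {s..t} \<Longrightarrow> g t \<le> g r"
  shows "l \<le> 0"
proof (rule ccontr)
  assume "\<not> l \<le> 0"
  then obtain d where "0 < d" and increasing: "\<And>h. 0 < h \<Longrightarrow> h < d \<Longrightarrow> g (t - h) < g t"
    using DERIV_pos_inc_left[OF assms(1)] by force
  define h where "h = min d (t - s) / 2"
  have "0 < h" "h < d" "s \<le> t - h"
    using \<open>0 < d\<close> \<open>s < t\<close> by (auto simp: h_def min_def field_simps)
  then show False
    using increasing[of h] min[of "t - h"] by simp
qed

lemma parabolic_minimum_principle:
  fixes w wx wxx wt :: "real \<Rightarrow> real \<Rightarrow> real"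
  assumes "0 < R" "S < T" "0 < a"
    and cont: "continuous_on ({0..R} \<times> {S..T}) (\<lambda>p. w (fst p) (snd p))"
    and left: "\<And>t. t \<in> {S..T} \<Longrightarrow> m \<le> w 0 t"
    and right: "\<And>t. t \<in> {S..T} \<Longrightarrow> m \<le> w R t"
    and bottom: "\<And>x. x \<in> {0..R} \<Longrightarrow> m \<le> w x S"
    and dx: "\<And>x t. x \<in> {0<..<R} \<Longrightarrow> t \<in> {S<..T} \<Longrightarrow>
      ((\<lambda>y. w y t) has_real_derivative wx x t) (at x)"
    and dxx: "\<And>x t. x \<in> {0<..<R} \<Longrightarrow> t \<in> {S<..T} \<Longrightarrow>
      ((\<lambda>y. wx y t) has_real_derivative wxx x t) (at x)"
    and dt: "\<And>x t. x \<in> {0<..<R} \<Longrightarrow> t \<in> {S<..T} \<Longrightarrow>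
      ((\<lambda>s. w x s) has_real_derivative wt x t) (at t)"
    and pde: "\<And>x t. x \<in> {0<..<R} \<Longrightarrow> t \<in> {S<..T} \<Longrightarrow>
      wt x t = a * wxx x t + b * wx x t"
    and xt: "x \<in> {0..R}" "t \<in> {S..T}"
  shows "m \<le> w x t"
proof (rule ccontr)
  assume "\<not> m \<le> w x t"
  \<comment> \<open>The penalty \<open>eps * (t - S)\<close> forces \<open>wt + eps \<le> 0\<close> at a minimum in the interior.\<close>
  define eps where "eps = (m - w x t) / (2 * (T - S))"
  define v where "v p = w (fst p) (snd p) + eps * (snd p - S)" for p :: "real \<times> real"
  define K where "K = {0..R} \<times> {S..T}"
  have eps: "0 < eps"
    using \<open>\<not> m \<le> w x t\<close> \<open>S < T\<close> by (simp add: eps_def)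
  have "continuous_on K v"
    unfolding v_def K_def by (intro continuous_intros cont)
  moreover have "compact K" "K \<noteq> {}"
    using \<open>0 < R\<close> \<open>S < T\<close> unfolding K_def by (auto intro: compact_Times)
  ultimately
  obtain xs ts where "(xs, ts) \<in> K" and min: "\<And>q. q \<in> K \<Longrightarrow> v (xs, ts) \<le> v q"
    using continuous_attains_inf[of K v] by auto
  then have xs: "xs \<in> {0..R}" and ts: "ts \<in> {S..T}"
    by (auto simp: K_def)
  have "v (x, t) \<le> w x t + eps * (T - S)"
    using eps \<open>t \<in> {S..T}\<close> unfolding v_def by (simp add: mult_left_mono)
  also have "\<dots> = (m + w x t) / 2"
    using \<open>S < T\<close> by (simp add: eps_def field_simps)
  also have "\<dots> < m"
    using \<open>\<not> m \<le> w x t\<close> by simp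
  finally have "v (x, t) < m" .
  then have "v (xs, ts) < m"
    using min[of "(x, t)"] xt by (simp add: K_def)
  then have "w xs ts < m" and "ts \<noteq> S \<or> w xs S < m"
    using eps ts by (auto simp: v_def intro: order.strict_trans1[rotated])
  then have interior: "xs \<in> {0<..<R}" "ts \<in> {S<..T}"
    using left[OF ts] right[OF ts] bottom[OF xs] xs ts by (auto simp: less_le)
  have min_w: "w xs ts \<le> w y s + eps * (s - ts)" if "y \<in> {0..R}" "s \<in> {S..T}" for y s
    using min[of "(y, s)"] that by (auto simp: K_def v_def algebra_simps)
  have min_x: "w xs ts \<le> w y ts" if "y \<in> {0..R}" for y
    using min_w[OF that ts] by simp
  have "wx xs ts = 0"
  proof (rule DERIV_local_min[OF dx[OF interior]])
    show "0 < min xs (R - xs)" using interior by simp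
    show "\<forall>y. \<bar>xs - y\<bar> < min xs (R - xs) \<longrightarrow> w xs ts \<le> w y ts"
      using min_x by (auto simp: abs_if split: if_splits)
  qed
  moreover have "0 \<le> wxx xs ts"
    by (rule deriv2_nonneg_at_right_local_min[where d="(R - xs) / 2", OF _ dx dxx[OF interior]])
       (use interior \<open>wx xs ts = 0\<close> in \<open>auto simp: field_simps intro!: min_x\<close>)
  ultimately have "0 \<le> wt xs ts"
    using pde[OF interior] \<open>0 < a\<close> by simp
  moreover have "wt xs ts + eps \<le> 0"
    by (rule deriv_nonpos_at_right_min[where g="\<lambda>s. w xs s + eps * s" and s=S])
       (use interior min_w[of xs] xs in \<open>auto intro!: derivative_eq_intros dt simp: algebra_simps\<close>)
  ultimately show False
    using eps by simp
qed

section \<open>The explicit value function\<close>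

locale drift_discount =
  fixes mu sg rho :: real
  assumes mu_pos: "0 < mu" and sg_pos: "0 < sg" and rho_pos: "0 < rho"
begin

abbreviation "R1 \<equiv> r1 mu sg rho"
abbreviation "R2 \<equiv> r2 mu sg rho"
abbreviation "U \<equiv> u0 mu sg rho"

lemma sqrt_discriminant:
  "sqrt (mu\<^sup>2 + 2 * sg\<^sup>2 * rho) * sqrt (mu\<^sup>2 + 2 * sg\<^sup>2 * rho) = mu\<^sup>2 + 2 * sg\<^sup>2 * rho"
  "mu < sqrt (mu\<^sup>2 + 2 * sg\<^sup>2 * rho)"
  using sg_pos rho_pos by (auto intro!: real_less_rsqrt simp: add_nonneg_nonneg)

lemma r1_pos: "0 < R1" and r2_pos: "0 < R2"
  using sqrt_discriminant(2) sg_pos mu_pos unfolding r1_def r2_def by simp_all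

lemma r1_root: "sg\<^sup>2 / 2 * R1\<^sup>2 + mu * R1 - rho = 0"
  and r2_root: "sg\<^sup>2 / 2 * R2\<^sup>2 - mu * R2 - rho = 0"
  and r1_r2_relation: "rho * (R1 - R2) + mu * R1 * R2 = 0"
  using sqrt_discriminant(1) sg_pos unfolding r1_def r2_def
  by (simp_all add: field_simps power2_eq_square)

lemma mu_r1_less_rho: "mu * R1 < rho"
proof -
  have "0 < sg\<^sup>2 / 2 * R1\<^sup>2" using sg_pos r1_pos by simp
  then show ?thesis using r1_root by linarith
qed

definition A :: real where "A = (rho + mu * R2) / (rho * (R1 + R2))"
definition B :: real where "B = (rho - mu * R1) / (rho * (R1 + R2))"

lemma A_pos: "0 < A" and B_pos: "0 < B"
  using mu_pos rho_pos r1_pos r2_pos mu_r1_less_rho unfolding A_def B_def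
  by (auto intro!: divide_pos_pos add_pos_pos)

definition V :: "real \<Rightarrow> real" where
  "V y = A * exp (R1 * (y - U)) - B * exp (- R2 * (y - U))"

definition V' :: "real \<Rightarrow> real" where
  "V' y = A * R1 * exp (R1 * (y - U)) + B * R2 * exp (- R2 * (y - U))"

definition V'' :: "real \<Rightarrow> real" where
  "V'' y = A * R1\<^sup>2 * exp (R1 * (y - U)) - B * R2\<^sup>2 * exp (- R2 * (y - U))"

lemma has_real_derivative_V: "(V has_real_derivative V' y) (at y)"
  unfolding V_def[abs_def] V'_def
  by (auto intro!: derivative_eq_intros simp: algebra_simps)

lemma has_real_derivative_V': "(V' has_real_derivative V'' y) (at y)"
  unfolding V'_def[abs_def] V''_def
  by (auto intro!: derivative_eq_intros simp: algebra_simps power2_eq_square)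

lemma V_ode: "sg\<^sup>2 / 2 * V'' y + mu * V' y - rho * V y = 0"
proof -
  have "sg\<^sup>2 / 2 * V'' y + mu * V' y - rho * V y
     = A * exp (R1 * (y - U)) * (sg\<^sup>2 / 2 * R1\<^sup>2 + mu * R1 - rho)
       - B * exp (- R2 * (y - U)) * (sg\<^sup>2 / 2 * R2\<^sup>2 - mu * R2 - rho)"
    unfolding V_def V'_def V''_def by (simp add: algebra_simps)
  also have "\<dots> = 0"
    unfolding r1_root r2_root by simp
  finally show ?thesis .
qed

lemma V_u0: "V U = mu / rho" and V'_u0: "V' U = 1"
proof -
  define d where "d = R1 + R2"
  have "0 < d" using r1_pos r2_pos by (simp add: d_def)
  then show "V U = mu / rho" "V' U = 1"
    unfolding V_def V'_def A_def B_def d_def[symmetric] using rho_pos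
    by (simp_all add: field_simps) (simp_all add: d_def algebra_simps)
qed

lemma V_0: "V 0 = 0"
proof -
  define Q where "Q = (rho + mu * R2) / (rho - mu * R1)"
  have "0 < rho + mu * R2" using mu_pos rho_pos r2_pos by (simp add: add_pos_pos)
  then have "0 < Q" unfolding Q_def using mu_r1_less_rho by simp
  moreover have "U = ln Q / (R1 + R2)" unfolding u0_def Q_def by simp
  ultimately have "exp (R1 * U) * exp (R2 * U) = Q"
    using r1_pos r2_pos by (simp flip: exp_add add: field_simps)
  then have "exp (R2 * U) = Q * exp (- R1 * U)"
    by (simp add: exp_minus field_simps)
  moreover have "B * Q = A"
    using mu_r1_less_rho unfolding A_def B_def Q_def by simp
  ultimately show ?thesis
    unfolding V_def by (simp add: mult.assoc[symmetric])
qed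

lemma V''_u0: "V'' U = 0"
proof -
  define d where "d = R1 + R2"
  have "0 < d" using r1_pos r2_pos by (simp add: d_def)
  then have "V'' U = d * (rho * (R1 - R2) + mu * R1 * R2) / (rho * d)"
    unfolding V''_def A_def B_def d_def[symmetric] using rho_pos
    by (simp add: field_simps) (simp add: d_def algebra_simps power2_eq_square)
  then show ?thesis by (simp add: r1_r2_relation)
qed

lemma V'_ge_1: "1 \<le> V' y"
proof -
  define d where "d = y - U"
  have "V' y - 1 = A * R1 * (exp (R1 * d) - 1) + B * R2 * (exp (- R2 * d) - 1)"
    using V'_u0 unfolding V'_def d_def by (simp add: algebra_simps)
  also have "\<dots> \<ge> A * R1 * (R1 * d) + B * R2 * (- R2 * d)"
  proof -
    have "R1 * d \<le> exp (R1 * d) - 1" "- R2 * d \<le> exp (- R2 * d) - 1"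
      using exp_ge_add_one_self[of "R1 * d"] exp_ge_add_one_self[of "- R2 * d"] by linarith+
    then show ?thesis
      using A_pos B_pos r1_pos r2_pos by (intro add_mono mult_left_mono) auto
  qed
  also have "A * R1 * (R1 * d) + B * R2 * (- R2 * d) = d * V'' U"
    unfolding V''_def by (simp add: algebra_simps power2_eq_square)
  finally show ?thesis by (simp add: V''_u0)
qed

lemma V_minus_id_mono: "a \<le> b \<Longrightarrow> V a - a \<le> V b - b"
  by (rule DERIV_nonneg_imp_nondecreasing[of a b "\<lambda>x. V x - x"])
     (use V'_ge_1 in \<open>auto intro!: exI derivative_eq_intros has_real_derivative_V\<close>)

lemma V_ge_id: "0 \<le> y \<Longrightarrow> y \<le> V y"
  using V_minus_id_mono[of 0 y] V_0 by simp

lemma V_ge_affine: "U \<le> y \<Longrightarrow> mu / rho + (y - U) \<le> V y"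
  using V_minus_id_mono[of U y] V_u0 by simp

lemma u0_nonneg: "0 \<le> U"
proof -
  have "0 < mu * R1" "0 < mu * R2"
    using mu_pos r1_pos r2_pos by simp_all
  then have "rho - mu * R1 \<le> rho + mu * R2"
    by linarith
  then have "0 \<le> ln ((rho + mu * R2) / (rho - mu * R1))"
    using mu_r1_less_rho by simp
  then show ?thesis
    unfolding u0_def using r1_pos r2_pos by simp
qed

lemma u0_le: "U \<le> mu / rho"
  using V_ge_id[OF u0_nonneg] V_u0 by simp

lemma V0_eq_V: "V0 mu sg rho = V"
  unfolding V0_def
proof (rule the_equality)
  show "\<exists>V' V''. (\<forall>x. (V has_real_derivative V' x) (at x)) \<and> (\<forall>x. (V' has_real_derivative V'' x) (at x))
      \<and> (\<forall>x. sg\<^sup>2 / 2 * V'' x + mu * V' x - rho * V x = 0) \<and> V U = mu / rho \<and> V' U = 1"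
    using has_real_derivative_V has_real_derivative_V' V_ode V_u0 V'_u0 by blast
next
  fix W
  assume "\<exists>W' W''. (\<forall>x. (W has_real_derivative W' x) (at x)) \<and> (\<forall>x. (W' has_real_derivative W'' x) (at x))
      \<and> (\<forall>x. sg\<^sup>2 / 2 * W'' x + mu * W' x - rho * W x = 0) \<and> W U = mu / rho \<and> W' U = 1"
  then obtain W' W'' where W: "\<And>x. (W has_real_derivative W' x) (at x)"
    and W': "\<And>x. (W' has_real_derivative W'' x) (at x)"
    and ode: "\<And>x. sg\<^sup>2 / 2 * W'' x + mu * W' x - rho * W x = 0" and "W U = mu / rho" "W' U = 1"
    by blast
  have "W y - V y = 0" for y
  proof (rule linear_ode2_eq_0[where D="\<lambda>x. W x - V x" and D'="\<lambda>x. W' x - V' x"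
        and D''="\<lambda>x. W'' x - V'' x" and u=U])
    show "((\<lambda>x. W x - V x) has_real_derivative W' x - V' x) (at x)" for x
      by (intro derivative_intros W has_real_derivative_V)
    show "((\<lambda>x. W' x - V' x) has_real_derivative W'' x - V'' x) (at x)" for x
      by (intro derivative_intros W' has_real_derivative_V')
    show "W'' x - V'' x = 2 * rho / sg\<^sup>2 * (W x - V x) + - 2 * mu / sg\<^sup>2 * (W' x - V' x)" for x
    proof -
      have W'': "W'' x = 2 / sg\<^sup>2 * (rho * W x - mu * W' x)"
        and V'': "V'' x = 2 / sg\<^sup>2 * (rho * V x - mu * V' x)"
        using ode[of x] V_ode[of x] sg_pos by (simp_all add: field_simps)
      show ?thesis
        unfolding W'' V'' using sg_pos by (simp add: field_simps)
    qed
    show "W U - V U = 0" "W' U - V' U = 0"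
      using \<open>W U = mu / rho\<close> \<open>W' U = 1\<close> V_u0 V'_u0 by simp_all
  qed
  then show "W = V" by auto
qed

lemma h_le_exp_V_of_ge_u0:
  assumes "0 < t" "U \<le> x"
  shows "h mu sg x t \<le> exp (rho * t) * V x"
proof -
  have "mu / rho - U + h mu sg x t \<le> exp (rho * t) * (x - U + mu / rho)"
    using h_le_exp_affine[OF mu_pos sg_pos rho_pos assms(1) _ assms(2)] u0_nonneg assms(2) by simp
  also have "\<dots> \<le> exp (rho * t) * V x"
    using V_ge_affine[OF assms(2)] by simp
  finally show ?thesis
    using u0_le by linarith
qed

lemma h_closed_le_exp_V_add:
  assumes "0 < d" "0 \<le> y"
  shows "h_closed mu sg y d \<le> exp (rho * d) * V y + mu * d"
proof -
  have "y \<le> V y" "1 \<le> exp (rho * d)"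
    using assms V_ge_id rho_pos by auto
  then have "y \<le> exp (rho * d) * V y"
    using assms mult_right_mono[of 1 "exp (rho * d)" "V y"] by simp
  moreover have "h_closed mu sg y d \<le> y + mu * d"
    using assms h_le_add_drift[of y d sg mu] h_eq_h_closed[of y d sg mu] sg_pos mu_pos by simp
  ultimately show ?thesis by simp
qed

lemma exp_V_minus_h_closed_heat_equation:
  assumes "0 < s"
  shows "rho * exp (rho * s) * V y - (mu - mu * hit_cdf mu sg y s)
      = sg\<^sup>2 / 2 * (exp (rho * s) * V'' y - h_closed_xx mu sg y s)
        + mu * (exp (rho * s) * V' y - h_closed_x mu sg y s)"
proof -
  have "rho * exp (rho * s) * V y = exp (rho * s) * (rho * V y)"
    by (simp add: ac_simps)
  also have "rho * V y = sg\<^sup>2 / 2 * V'' y + mu * V' y"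
    using V_ode[of y] by simp
  finally show ?thesis
    unfolding h_closed_heat_equation[OF assms sg_pos] by (simp add: algebra_simps)
qed

lemma exp_V_minus_h_closed_lower_bound:
  assumes "0 < d" "d < T" "0 \<le> x" "x < U"
  shows "- (mu * d) \<le> exp (rho * T) * V x - h_closed mu sg x T"
proof (rule parabolic_minimum_principle[where w="\<lambda>y s. exp (rho * s) * V y - h_closed mu sg y s"
    and wx="\<lambda>y s. exp (rho * s) * V' y - h_closed_x mu sg y s"
    and wxx="\<lambda>y s. exp (rho * s) * V'' y - h_closed_xx mu sg y s"
    and wt="\<lambda>y s. rho * exp (rho * s) * V y - (mu - mu * hit_cdf mu sg y s)"
    and R=U and S=d and T=T and a="sg\<^sup>2 / 2" and b=mu])
  show "0 < U" "d < T" "0 < sg\<^sup>2 / 2" "x \<in> {0..U}" "T \<in> {d..T}"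
    using assms sg_pos by auto
  show "continuous_on ({0..U} \<times> {d..T}) (\<lambda>p. exp (rho * snd p) * V (fst p) - h_closed mu sg (fst p) (snd p))"
    unfolding V_def h_closed_def using assms sg_pos by (intro continuous_intros) auto
  show "- (mu * d) \<le> exp (rho * s) * V 0 - h_closed mu sg 0 s" if "s \<in> {d..T}" for s
    using that assms mu_pos h_closed_0 V_0 by simp
  show "- (mu * d) \<le> exp (rho * s) * V U - h_closed mu sg U s" if "s \<in> {d..T}" for s
  proof -
    have "0 < s" using that assms by simp
    then have "h_closed mu sg U s \<le> exp (rho * s) * V U"
      using h_le_exp_V_of_ge_u0[of s U] h_eq_h_closed[OF u0_nonneg _ sg_pos mu_pos] by simp
    moreover have "0 \<le> mu * d" using mu_pos assms by simp
    ultimately show ?thesis by linarith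
  qed
  show "- (mu * d) \<le> exp (rho * d) * V y - h_closed mu sg y d" if "y \<in> {0..U}" for y
    using h_closed_le_exp_V_add[OF assms(1)] that by fastforce
  fix y s assume "s \<in> {d<..T}"
  then have "0 < s" using assms by simp
  show "((\<lambda>y. exp (rho * s) * V y - h_closed mu sg y s) has_real_derivative
      exp (rho * s) * V' y - h_closed_x mu sg y s) (at y)"
    by (rule DERIV_diff[OF DERIV_cmult[OF has_real_derivative_V]
          has_real_derivative_h_closed_x[OF \<open>0 < s\<close> sg_pos]])
  show "((\<lambda>y. exp (rho * s) * V' y - h_closed_x mu sg y s) has_real_derivative
      exp (rho * s) * V'' y - h_closed_xx mu sg y s) (at y)"
    by (rule DERIV_diff[OF DERIV_cmult[OF has_real_derivative_V']
          has_real_derivative_h_closed_x_x[OF \<open>0 < s\<close> sg_pos]])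
  show "((\<lambda>s. exp (rho * s) * V y - h_closed mu sg y s) has_real_derivative
      rho * exp (rho * s) * V y - (mu - mu * hit_cdf mu sg y s)) (at s)"
    using \<open>0 < s\<close> sg_pos by (auto intro!: derivative_eq_intros has_real_derivative_h_closed_t)
  show "rho * exp (rho * s) * V y - (mu - mu * hit_cdf mu sg y s)
      = sg\<^sup>2 / 2 * (exp (rho * s) * V'' y - h_closed_xx mu sg y s)
        + mu * (exp (rho * s) * V' y - h_closed_x mu sg y s)"
    by (rule exp_V_minus_h_closed_heat_equation[OF \<open>0 < s\<close>])
qed

lemma h_le_exp_V:
  assumes "0 < t" "0 \<le> x"
  shows "h mu sg x t \<le> exp (rho * t) * V x"
proof (cases "U \<le> x")
  case False
  have "((\<lambda>d. - (mu * d)) \<longlongrightarrow> - (mu * 0)) (at_right 0)"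
    by (intro tendsto_intros)
  moreover have "\<forall>\<^sub>F d in at_right 0. - (mu * d) \<le> exp (rho * t) * V x - h_closed mu sg x t"
    unfolding eventually_at_right_field
    using False assms by (intro exI[of _ t]) (auto intro: exp_V_minus_h_closed_lower_bound)
  ultimately have "- (mu * 0) \<le> exp (rho * t) * V x - h_closed mu sg x t"
    by (rule tendsto_upperbound) simp
  then show ?thesis
    using h_eq_h_closed[OF assms(2,1) sg_pos mu_pos] by simp
qed (rule h_le_exp_V_of_ge_u0[OF assms(1)])

end

theorem lemma2p1:
  fixes mu sg rho :: real
  assumes "mu > 0" and "sg > 0" and "rho > 0"
  shows "(\<forall>t>0. concave_on {0<..} (\<lambda>x. h mu sg x t))
    \<and> (\<forall>t>0. \<forall>x\<ge>u0 mu sg rho.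
          mu / rho - u0 mu sg rho + h mu sg x t
            \<le> exp (rho * t) * (x - u0 mu sg rho + mu / rho))
    \<and> (\<forall>t>0. \<forall>x\<ge>0. h mu sg x t \<le> exp (rho * t) * V0 mu sg rho x)"
proof -
  interpret drift_discount mu sg rho
    using assms by unfold_locales
  show ?thesis
    using concave_on_h[OF assms(1,2)] h_le_exp_affine[OF assms] u0_nonneg h_le_exp_V
    by (auto simp: V0_eq_V)
qed

end
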